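(* Let $n,m\in\mathbb{N}$ with $2\le m\le n-1$, let $H(\psi),H(\chi)\in Z_{n,m}$, and let $U_m$ be the stabiliser of $1$ in $S_m$. Then: (i) $H(\psi)\cong H(\chi)$ if and only if $\psi$ and $\chi$ lie in the same orbit of the power group $S_{[n]\setminus[m]}^{\times 2}\times U_m$; (ii) $H(\psi)$ and $H(\chi)$ are isomorphic or anti-isomorphic if and only if $\psi$ and $\chi$ lie in the same orbit of the power group $2S_{[n]\setminus[m]}^{\times 2}\times U_m$; (iii) if moreover $H(\psi)$ and $H(\chi)$ are commutative, then $H(\psi)\cong H(\chi)$ if and only if $\psi'$ and $\chi'$ lie in the same orbit of the power group $S_{[n]\setminus[m]}^{\{2\}}\times U_m$.
   Context: $[n]=\{1,\ldots,n\}$. For $\psi:([n]\setminus[m])\times([n]\setminus[m])\to[m]$, $H(\psi)$ is $[n]$ with $xy=\psi(x,y)$ for $x,y\in[n]\setminus[m]$ and $xy=1$ otherwise; $Z_{n,m}$ is the set of $H(\psi)$ with $[m]\setminus\{1\}\subseteq\operatorname{im}\psi$. If $H(\psi)$ is commutative, $\psi'$ is the function on subsets of $[n]\setminus[m]$ of size $1$ or $2$ given by $\psi'\{i,j\}=\psi(i,j)$. An anti-isomorphism $S\to T$ is a bijection $f$ with $f(xy)=f(y)f(x)$. Power group: if groups $A$ and $B$ act on finite sets $X$ and $Y$, then $A\times B$ acts on functions $f:X\to Y$ by $f^{(\alpha,\beta)}(x)=(f(x^\alpha))^\beta$. Actions on $X=[n]\setminus[m]$: $S_X^{\times 2}$ is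 $S_X$ acting on $X\times X$ by $(x_1,x_2)^\alpha=(x_1^\alpha,x_2^\alpha)$; $2S_X^{\times 2}$ is $S_2\times S_X$ acting on $X\times X$ by $(x_1,x_2)^{(\pi,\alpha)}=(x_{1^\pi}^\alpha,x_{2^\pi}^\alpha)$; $S_X^{\{2\}}$ is $S_X$ acting on the set of subsets of $X$ of size $1$ or $2$ by $\{x_1,x_2\}^\alpha=\{x_1^\alpha,x_2^\alpha\}$. $U_m$ acts naturally on $[m]$. *)

theory Defs
  imports "HOL-Combinatorics.Permutations"
begin

definition Xs :: "nat \<Rightarrow> nat \<Rightarrow> nat set" where
  "Xs n m = {1..n} - {1..m}"

text \<open>Multiplication of H(psi) on [n]: xy = psi x y for x,y in [n]\[m], and 1 otherwise.
  Only the values of psi on Xs n m \<times> Xs n m matter.\<close>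
definition Hmul :: "nat \<Rightarrow> nat \<Rightarrow> (nat \<Rightarrow> nat \<Rightarrow> nat) \<Rightarrow> nat \<Rightarrow> nat \<Rightarrow> nat" where
  "Hmul n m psi x y = (if x \<in> Xs n m \<and> y \<in> Xs n m then psi x y else 1)"

definition in_Z :: "nat \<Rightarrow> nat \<Rightarrow> (nat \<Rightarrow> nat \<Rightarrow> nat) \<Rightarrow> bool" where
  "in_Z n m psi \<longleftrightarrow>
     (\<forall>x\<in>Xs n m. \<forall>y\<in>Xs n m. psi x y \<in> {1..m}) \<and>
     {1..m} - {1} \<subseteq> (\<lambda>(x, y). psi x y) ` (Xs n m \<times> Xs n m)"

definition H_iso :: "nat \<Rightarrow> nat \<Rightarrow> (nat \<Rightarrow> nat \<Rightarrow> nat) \<Rightarrow> (nat \<Rightarrow> nat \<Rightarrow> nat) \<Rightarrow> bool" where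
  "H_iso n m psi chi \<longleftrightarrow> (\<exists>f. bij_betw f {1..n} {1..n} \<and>
     (\<forall>x\<in>{1..n}. \<forall>y\<in>{1..n}. f (Hmul n m psi x y) = Hmul n m chi (f x) (f y)))"

definition H_anti_iso :: "nat \<Rightarrow> nat \<Rightarrow> (nat \<Rightarrow> nat \<Rightarrow> nat) \<Rightarrow> (nat \<Rightarrow> nat \<Rightarrow> nat) \<Rightarrow> bool" where
  "H_anti_iso n m psi chi \<longleftrightarrow> (\<exists>f. bij_betw f {1..n} {1..n} \<and>
     (\<forall>x\<in>{1..n}. \<forall>y\<in>{1..n}. f (Hmul n m psi x y) = Hmul n m chi (f y) (f x)))"

definition H_commutative :: "nat \<Rightarrow> nat \<Rightarrow> (nat \<Rightarrow> nat \<Rightarrow> nat) \<Rightarrow> bool" where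
  "H_commutative n m psi \<longleftrightarrow> (\<forall>x\<in>{1..n}. \<forall>y\<in>{1..n}. Hmul n m psi x y = Hmul n m psi y x)"

definition U :: "nat \<Rightarrow> (nat \<Rightarrow> nat) set" where
  "U m = {\<beta>. \<beta> permutes {1..m} \<and> \<beta> 1 = 1}"

text \<open>Same orbit of the power group S_X^{\<times>2} \<times> U_m on functions X \<times> X \<rightarrow> [m]:
  chi = psi^(alpha,beta), i.e. chi(x1,x2) = beta(psi(x1^alpha, x2^alpha)).\<close>
definition orbit_SX2 :: "nat \<Rightarrow> nat \<Rightarrow> (nat \<Rightarrow> nat \<Rightarrow> nat) \<Rightarrow> (nat \<Rightarrow> nat \<Rightarrow> nat) \<Rightarrow> bool" where
  "orbit_SX2 n m psi chi \<longleftrightarrow> (\<exists>\<alpha> \<beta>. \<alpha> permutes Xs n m \<and> \<beta> \<in> U m \<and>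
     (\<forall>x1\<in>Xs n m. \<forall>x2\<in>Xs n m. chi x1 x2 = \<beta> (psi (\<alpha> x1) (\<alpha> x2))))"

text \<open>Same orbit of the power group 2S_X^{\<times>2} \<times> U_m; pi in S_2 acts on coordinates:
  (x1,x2)^(pi,alpha) = (x_{1^pi}^alpha, x_{2^pi}^alpha).\<close>
definition orbit_2SX2 :: "nat \<Rightarrow> nat \<Rightarrow> (nat \<Rightarrow> nat \<Rightarrow> nat) \<Rightarrow> (nat \<Rightarrow> nat \<Rightarrow> nat) \<Rightarrow> bool" where
  "orbit_2SX2 n m psi chi \<longleftrightarrow> (\<exists>\<pi> \<alpha> \<beta>. \<pi> permutes {1::nat, 2} \<and> \<alpha> permutes Xs n m \<and> \<beta> \<in> U m \<and>
     (\<forall>x1\<in>Xs n m. \<forall>x2\<in>Xs n m.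
        (let x = (\<lambda>i::nat. if i = 1 then x1 else x2)
         in chi x1 x2 = \<beta> (psi (\<alpha> (x (\<pi> 1))) (\<alpha> (x (\<pi> 2)))))))"

definition P12 :: "nat set \<Rightarrow> nat set set" where
  "P12 X = {S. S \<subseteq> X \<and> (card S = 1 \<or> card S = 2)}"

text \<open>psi'{i,j} = psi(i,j) (well defined when H(psi) is commutative).\<close>
definition psi' :: "(nat \<Rightarrow> nat \<Rightarrow> nat) \<Rightarrow> nat set \<Rightarrow> nat" where
  "psi' psi S = psi (Min S) (Max S)"

text \<open>Same orbit of the power group S_X^{2} \<times> U_m on functions P12(X) \<rightarrow> [m]:
  chi'(S) = beta(psi'(S^alpha)), with S^alpha = alpha ` S.\<close>
definition orbit_SXset :: "nat \<Rightarrow> nat \<Rightarrow> (nat set \<Rightarrow> nat) \<Rightarrow> (nat set \<Rightarrow> nat) \<Rightarrow> bool" where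
  "orbit_SXset n m f g \<longleftrightarrow> (\<exists>\<alpha> \<beta>. \<alpha> permutes Xs n m \<and> \<beta> \<in> U m \<and>
     (\<forall>S\<in>P12 (Xs n m). g S = \<beta> (f (\<alpha> ` S))))"

end

theory Submission
  imports Defs
begin

text \<open>
  Write X = [n] \ [m].  In H(psi) every product lies in [m], and conversely
  every element of [m] is a product: 1 = 1*1, and [m] \ {1} lies in the image of psi.
  So [m] is exactly the set of products H(psi)H(psi), an isomorphism invariant; hence every
  isomorphism f : H(psi) \<rightarrow> H(chi) maps [m] onto [m], X onto X, and fixes 1 (as f 1 = f(1*1)).
  Its restriction beta to [m] lies in U_m, the inverse alpha of its restriction to X permutes X,
  and the homomorphism condition on X \<times> X reads chi = psi^(alpha,beta).  Conversely inv alpha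
  on X glued with beta on [m] is an isomorphism.  This gives (i).

  An anti-isomorphism H(psi) \<rightarrow> H(chi) is an isomorphism from H(opp psi), where
  opp psi (x, y) = psi (y, x), and an orbit of 2S_X^{\<times>2} \<times> U_m is the union of the
  S_X^{\<times>2} \<times> U_m-orbits of psi and of opp psi; so (ii) follows from (i) applied to opp psi.
  For (iii), a commutative psi is symmetric on X \<times> X and is determined by psi', and the
  orbit condition on psi' is the orbit condition on psi rewritten pair by pair.
\<close>

lemma carrier_split: "m < n \<Longrightarrow> {1..n} = {1..m} \<union> Xs n m"
  unfolding Xs_def by auto

definition products :: "('a \<Rightarrow> 'a \<Rightarrow> 'a) \<Rightarrow> 'a set \<Rightarrow> 'a set" where
  "products mul A = (\<lambda>(x, y). mul x y) ` (A \<times> A)"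

lemma bij_hom_products:
  assumes f: "bij_betw f A B"
    and hom: "\<forall>x\<in>A. \<forall>y\<in>A. f (mul1 x y) = mul2 (f x) (f y)"
  shows "f ` products mul1 A = products mul2 B"
proof -
  have "f ` products mul1 A = (\<lambda>(x, y). mul2 (f x) (f y)) ` (A \<times> A)"
    unfolding products_def image_image using hom by (auto intro!: image_cong)
  also have "\<dots> = (\<lambda>(x, y). mul2 x y) ` ((\<lambda>(x, y). (f x, f y)) ` (A \<times> A))"
    by (simp add: image_image case_prod_beta)
  also have "(\<lambda>(x, y). (f x, f y)) ` (A \<times> A) = B \<times> B"
    using bij_betw_imp_surj_on[OF f] by (auto simp: map_prod_surj_on[symmetric] map_prod_def)
  finally show ?thesis unfolding products_def .
qed

text \<open>In H(psi) the set of products is exactly [m]; this needs the surjectivity in Z_{n,m}.\<close>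
lemma products_H:
  assumes "in_Z n m psi" and "1 \<le> m" and "m < n"
  shows "products (Hmul n m psi) {1..n} = {1..m}"
proof
  show "products (Hmul n m psi) {1..n} \<subseteq> {1..m}"
    using assms(1,2) unfolding products_def in_Z_def Hmul_def by auto
  have "1 \<in> products (Hmul n m psi) {1..n}"
  proof -
    have "Hmul n m psi 1 1 = 1"
      using assms(2) by (simp add: Hmul_def Xs_def)
    then show ?thesis
      using assms(2,3) unfolding products_def by (auto intro!: image_eqI[of _ _ "(1, 1)"])
  qed
  moreover have "(\<lambda>(x, y). psi x y) ` (Xs n m \<times> Xs n m) \<subseteq> products (Hmul n m psi) {1..n}"
    unfolding products_def by (force simp: Hmul_def Xs_def)
  ultimately show "{1..m} \<subseteq> products (Hmul n m psi) {1..n}"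
    using assms(1) unfolding in_Z_def by blast
qed

lemma iso_preserves_blocks:
  assumes "1 \<le> m" and "m < n" and "in_Z n m psi" and "in_Z n m chi"
    and f: "bij_betw f {1..n} {1..n}"
    and hom: "\<forall>x\<in>{1..n}. \<forall>y\<in>{1..n}. f (Hmul n m psi x y) = Hmul n m chi (f x) (f y)"
  shows "f ` {1..m} = {1..m}" and "f ` Xs n m = Xs n m" and "f 1 = 1"
proof -
  show fm: "f ` {1..m} = {1..m}"
    using bij_hom_products[OF f hom] products_H assms(1-4) by metis
  have "f ` ({1..n} - {1..m}) = f ` {1..n} - f ` {1..m}"
    using bij_betw_imp_inj_on[OF f] assms(2) by (intro inj_on_image_set_diff) auto
  then show "f ` Xs n m = Xs n m"
    using fm bij_betw_imp_surj_on[OF f] unfolding Xs_def by simp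
  have one: "1 \<in> {1..m}" "1 \<in> {1..n}" "1 \<notin> Xs n m"
    using assms(1,2) by (auto simp: Xs_def)
  then have "f 1 \<notin> Xs n m"
    using fm by (auto simp: Xs_def)
  moreover have "f (Hmul n m psi 1 1) = Hmul n m chi (f 1) (f 1)"
    using hom one by blast
  ultimately show "f 1 = 1"
    using one by (simp add: Hmul_def)
qed

text \<open>An isomorphism f yields the orbit witnesses beta = f on [m] and alpha = (f on X)^-1.\<close>
lemma iso_imp_orbit:
  assumes "1 \<le> m" and "m < n" and zp: "in_Z n m psi" and zc: "in_Z n m chi"
    and "H_iso n m psi chi"
  shows "orbit_SX2 n m psi chi"
proof -
  let ?X = "Xs n m"
  obtain f where f: "bij_betw f {1..n} {1..n}"
    and hom: "\<forall>x\<in>{1..n}. \<forall>y\<in>{1..n}. f (Hmul n m psi x y) = Hmul n m chi (f x) (f y)"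
    using assms(5) unfolding H_iso_def by blast
  note blocks = iso_preserves_blocks[OF assms(1-4) f hom]
  have inj: "inj_on f A" if "A \<subseteq> {1..n}" for A
    using bij_betw_imp_inj_on[OF f] inj_on_subset that by blast
  define \<beta> where "\<beta> = restrict_id f {1..m}"
  define g where "g = restrict_id f ?X"
  define \<alpha> where "\<alpha> = inv g"
  have "bij_betw f {1..m} {1..m}" "bij_betw f ?X ?X"
    using blocks(1,2) inj assms(2) by (auto simp: bij_betw_def Xs_def)
  then have \<beta>: "\<beta> permutes {1..m}" and g: "g permutes ?X"
    unfolding \<beta>_def g_def by (simp_all add: permutes_restrict_id)
  have \<beta>U: "\<beta> \<in> U m"
    using \<beta> blocks(3) assms(1) by (simp add: U_def \<beta>_def)
  have \<alpha>: "\<alpha> permutes ?X"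
    unfolding \<alpha>_def using g by (rule permutes_inv)
  have "chi x1 x2 = \<beta> (psi (\<alpha> x1) (\<alpha> x2))" if x: "x1 \<in> ?X" "x2 \<in> ?X" for x1 x2
  proof -
    have a: "\<alpha> x1 \<in> ?X" "\<alpha> x2 \<in> ?X"
      using x \<alpha> by (simp_all add: permutes_in_image)
    have "g (\<alpha> x1) = x1" "g (\<alpha> x2) = x2"
      unfolding \<alpha>_def using permutes_inverses(1)[OF g] by simp_all
    then have fa: "f (\<alpha> x1) = x1" "f (\<alpha> x2) = x2"
      using a by (simp_all add: g_def)
    have "psi (\<alpha> x1) (\<alpha> x2) \<in> {1..m}"
      using zp a unfolding in_Z_def by blast
    moreover have "f (Hmul n m psi (\<alpha> x1) (\<alpha> x2)) = Hmul n m chi x1 x2"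
      using hom a fa by (metis DiffD1 Xs_def)
    then have "f (psi (\<alpha> x1) (\<alpha> x2)) = chi x1 x2"
      using a x by (simp add: Hmul_def)
    ultimately show ?thesis
      by (simp add: \<beta>_def)
  qed
  then show ?thesis
    unfolding orbit_SX2_def using \<alpha> \<beta>U by blast
qed

text \<open>Conversely, from chi = psi^(alpha,beta) the map inv alpha \<circ> beta is an isomorphism.\<close>
lemma orbit_imp_iso:
  assumes "1 \<le> m" and "m < n" and zp: "in_Z n m psi"
    and "orbit_SX2 n m psi chi"
  shows "H_iso n m psi chi"
proof -
  let ?X = "Xs n m"
  obtain \<alpha> \<beta> where \<alpha>: "\<alpha> permutes ?X" and \<beta>U: "\<beta> \<in> U m"
    and eq: "\<forall>x1\<in>?X. \<forall>x2\<in>?X. chi x1 x2 = \<beta> (psi (\<alpha> x1) (\<alpha> x2))"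
    using assms(4) unfolding orbit_SX2_def by blast
  have \<beta>: "\<beta> permutes {1..m}" and \<beta>1: "\<beta> 1 = 1"
    using \<beta>U by (auto simp: U_def)
  have \<alpha>': "inv \<alpha> permutes ?X"
    using \<alpha> by (rule permutes_inv)
  define f where "f = inv \<alpha> \<circ> \<beta>"
  have f: "f permutes {1..n}"
    unfolding f_def carrier_split[OF assms(2)]
    by (rule permutes_compose[OF permutes_subset[OF \<beta>] permutes_subset[OF \<alpha>']]) auto
  have fX: "f x = inv \<alpha> x" if "x \<in> ?X" for x
    using that \<beta> by (auto simp: f_def permutes_not_in Xs_def)
  have fm: "f x = \<beta> x" and fm_in: "f x \<in> {1..m}" if "x \<in> {1..m}" for x
  proof -
    have "\<beta> x \<in> {1..m}"
      using that permutes_in_image[OF \<beta>] by blast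
    moreover then have "\<beta> x \<notin> ?X"
      by (auto simp: Xs_def)
    ultimately show "f x = \<beta> x" "f x \<in> {1..m}"
      using \<alpha>' by (simp_all add: f_def permutes_not_in)
  qed
  have "f (Hmul n m psi x y) = Hmul n m chi (f x) (f y)"
    if x: "x \<in> {1..n}" and y: "y \<in> {1..n}" for x y
  proof (cases "x \<in> ?X \<and> y \<in> ?X")
    case True
    have a: "inv \<alpha> x \<in> ?X" "inv \<alpha> y \<in> ?X"
      using True \<alpha>' by (simp_all add: permutes_in_image)
    have "chi (inv \<alpha> x) (inv \<alpha> y) = \<beta> (psi x y)"
      using eq a permutes_inverses(1)[OF \<alpha>] by simp
    moreover have "psi x y \<in> {1..m}"
      using zp True unfolding in_Z_def by blast
    ultimately show ?thesis
      using True a fX fm by (simp add: Hmul_def)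
  next
    case False
    then have "x \<in> {1..m} \<or> y \<in> {1..m}"
      using x y carrier_split[OF assms(2)] by blast
    then have "f x \<notin> ?X \<or> f y \<notin> ?X"
      using fm_in by (auto simp: Xs_def)
    moreover have "f 1 = 1"
      using fm[of 1] \<beta>1 assms(1) by simp
    ultimately show ?thesis
      using False by (auto simp: Hmul_def)
  qed
  then show ?thesis
    unfolding H_iso_def using permutes_imp_bij[OF f] by blast
qed

lemma iso_iff_orbit:
  assumes "1 \<le> m" and "m < n" and "in_Z n m psi" and "in_Z n m chi"
  shows "H_iso n m psi chi \<longleftrightarrow> orbit_SX2 n m psi chi"
  using iso_imp_orbit[OF assms] orbit_imp_iso[OF assms(1-3)] by blast

definition opp :: "('a \<Rightarrow> 'a \<Rightarrow> 'b) \<Rightarrow> 'a \<Rightarrow> 'a \<Rightarrow> 'b" where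
  "opp psi = (\<lambda>x y. psi y x)"

lemma Hmul_opp: "Hmul n m (opp psi) x y = Hmul n m psi y x"
  by (auto simp: Hmul_def opp_def)

lemma anti_iso_iff_iso_opp: "H_anti_iso n m psi chi \<longleftrightarrow> H_iso n m (opp psi) chi"
  unfolding H_anti_iso_def H_iso_def Hmul_opp by (rule ex_cong1) blast

lemma in_Z_opp:
  assumes "in_Z n m psi"
  shows "in_Z n m (opp psi)"
proof -
  have "(\<lambda>(x, y). opp psi x y) ` (Xs n m \<times> Xs n m) = (\<lambda>(x, y). psi x y) ` (Xs n m \<times> Xs n m)"
    unfolding opp_def by (auto intro: image_eqI[of _ _ "prod.swap _"])
  then show ?thesis
    using assms unfolding in_Z_def by (simp add: opp_def)
qed

lemma permutes_two:
  assumes "\<pi> permutes {1::nat, 2}"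
  shows "(\<pi> 1 = 1 \<and> \<pi> 2 = 2) \<or> (\<pi> 1 = 2 \<and> \<pi> 2 = 1)"
proof -
  have "\<pi> 1 \<in> {1, 2}" "\<pi> 2 \<in> {1, 2}"
    using permutes_in_image[OF assms] by auto
  moreover have "\<pi> 1 \<noteq> \<pi> 2"
    using permutes_inj[OF assms] by (metis inj_eq numeral_One numeral_eq_iff semiring_norm(85))
  ultimately show ?thesis
    by auto
qed

text \<open>The coordinate swap in 2S_X^{\<times>2} replaces psi by opp psi.\<close>
lemma orbit_2SX2_iff:
  "orbit_2SX2 n m psi chi \<longleftrightarrow> orbit_SX2 n m psi chi \<or> orbit_SX2 n m (opp psi) chi"
proof
  assume "orbit_2SX2 n m psi chi"
  then obtain \<pi> \<alpha> \<beta> where \<pi>: "\<pi> permutes {1::nat, 2}" and \<alpha>: "\<alpha> permutes Xs n m" and \<beta>: "\<beta> \<in> U m"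
    and eq: "\<forall>x1\<in>Xs n m. \<forall>x2\<in>Xs n m.
        (let x = (\<lambda>i::nat. if i = 1 then x1 else x2)
         in chi x1 x2 = \<beta> (psi (\<alpha> (x (\<pi> 1))) (\<alpha> (x (\<pi> 2)))))"
    unfolding orbit_2SX2_def by blast
  from permutes_two[OF \<pi>] show "orbit_SX2 n m psi chi \<or> orbit_SX2 n m (opp psi) chi"
  proof
    assume "\<pi> 1 = 1 \<and> \<pi> 2 = 2"
    then have "orbit_SX2 n m psi chi"
      using \<alpha> \<beta> eq unfolding orbit_SX2_def by (simp add: Let_def) blast
    then show ?thesis ..
  next
    assume "\<pi> 1 = 2 \<and> \<pi> 2 = 1"
    then have "orbit_SX2 n m (opp psi) chi"
      using \<alpha> \<beta> eq unfolding orbit_SX2_def by (simp add: Let_def opp_def) blast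
    then show ?thesis ..
  qed
next
  have id: "id permutes {1::nat, 2}" and swap: "transpose 1 2 permutes {1::nat, 2}"
    by (auto intro: permutes_id permutes_swap_id)
  assume "orbit_SX2 n m psi chi \<or> orbit_SX2 n m (opp psi) chi"
  then show "orbit_2SX2 n m psi chi"
  proof
    assume "orbit_SX2 n m psi chi"
    then show ?thesis
      using id unfolding orbit_SX2_def orbit_2SX2_def by (fastforce simp: Let_def)
  next
    assume "orbit_SX2 n m (opp psi) chi"
    then show ?thesis
      using swap unfolding orbit_SX2_def orbit_2SX2_def opp_def by (fastforce simp: Let_def)
  qed
qed

lemma psi'_pair:
  assumes "\<And>x y. x \<in> A \<Longrightarrow> y \<in> A \<Longrightarrow> g x y = g y x" and "a \<in> A" and "b \<in> A"
  shows "psi' g {a, b} = g a b"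
  using assms by (cases "a \<le> b") (simp_all add: psi'_def min_def max_def)

lemma P12_pair:
  assumes "S \<in> P12 A"
  obtains a b where "a \<in> A" "b \<in> A" "S = {a, b}"
proof -
  have "S \<subseteq> A" and "card S = 1 \<or> card S = 2"
    using assms by (auto simp: P12_def)
  then show ?thesis
    using that by (auto simp: card_1_singleton_iff card_2_iff)
qed

lemma pair_in_P12: "a \<in> A \<Longrightarrow> b \<in> A \<Longrightarrow> {a, b} \<in> P12 A"
  by (cases "a = b") (auto simp: P12_def)

lemma H_commutative_sym:
  assumes "H_commutative n m psi" and "x \<in> Xs n m" and "y \<in> Xs n m"
  shows "psi x y = psi y x"
proof -
  have "Hmul n m psi x y = Hmul n m psi y x"
    using assms unfolding H_commutative_def Xs_def by blast
  then show ?thesis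
    using assms(2,3) by (simp add: Hmul_def)
qed

lemma orbit_SXset_iff:
  assumes sp: "\<And>x y. x \<in> Xs n m \<Longrightarrow> y \<in> Xs n m \<Longrightarrow> psi x y = psi y x"
    and sc: "\<And>x y. x \<in> Xs n m \<Longrightarrow> y \<in> Xs n m \<Longrightarrow> chi x y = chi y x"
  shows "orbit_SXset n m (psi' psi) (psi' chi) \<longleftrightarrow> orbit_SX2 n m psi chi"
proof -
  have "(\<forall>S\<in>P12 (Xs n m). psi' chi S = \<beta> (psi' psi (\<alpha> ` S)))
    \<longleftrightarrow> (\<forall>x1\<in>Xs n m. \<forall>x2\<in>Xs n m. chi x1 x2 = \<beta> (psi (\<alpha> x1) (\<alpha> x2)))"
    if \<alpha>: "\<alpha> permutes Xs n m" for \<alpha> and \<beta> :: "nat \<Rightarrow> nat"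
  proof -
    have pair: "psi' chi {a, b} = \<beta> (psi' psi (\<alpha> ` {a, b})) \<longleftrightarrow> chi a b = \<beta> (psi (\<alpha> a) (\<alpha> b))"
      if "a \<in> Xs n m" "b \<in> Xs n m" for a b
      using that permutes_in_image[OF \<alpha>] psi'_pair[OF sc that] psi'_pair[OF sp, where a="\<alpha> a" and b="\<alpha> b"]
      by simp
    show ?thesis
      using pair pair_in_P12 P12_pair by metis
  qed
  then show ?thesis
    unfolding orbit_SXset_def orbit_SX2_def by blast
qed

theorem lemma6p2:
  fixes n m :: nat and psi chi :: "nat \<Rightarrow> nat \<Rightarrow> nat"
  assumes "2 \<le> m" and "m \<le> n - 1"
    and "in_Z n m psi" and "in_Z n m chi"
  shows "(H_iso n m psi chi \<longleftrightarrow> orbit_SX2 n m psi chi)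
       \<and> ((H_iso n m psi chi \<or> H_anti_iso n m psi chi) \<longleftrightarrow> orbit_2SX2 n m psi chi)
       \<and> (H_commutative n m psi \<and> H_commutative n m chi \<longrightarrow>
            (H_iso n m psi chi \<longleftrightarrow> orbit_SXset n m (psi' psi) (psi' chi)))"
proof -
  have m: "1 \<le> m" "m < n"
    using assms(1,2) by auto
  have iso: "H_iso n m psi chi \<longleftrightarrow> orbit_SX2 n m psi chi"
    using iso_iff_orbit[OF m assms(3,4)] .
  have anti: "H_anti_iso n m psi chi \<longleftrightarrow> orbit_SX2 n m (opp psi) chi"
    using anti_iso_iff_iso_opp iso_iff_orbit[OF m in_Z_opp[OF assms(3)] assms(4)] by blast
  have comm: "orbit_SXset n m (psi' psi) (psi' chi) \<longleftrightarrow> orbit_SX2 n m psi chi"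
    if "H_commutative n m psi" "H_commutative n m chi"
    using orbit_SXset_iff H_commutative_sym that by blast
  show ?thesis
    using iso anti comm orbit_2SX2_iff by blast
qed

end
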